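(* Let $X$ be a real Banach space ordered by a cone $K$. Suppose $A$ is a bounded, $K$-preserving, semi-nonsupporting operator with $A=T+F$, where $T,F$ are bounded linear operators with $T(K)\subseteq K$, $F(K)\subseteq K$. Then $aT+bF$ is semi-nonsupporting for all real $a,b>0$.
   Context: A cone $K\subseteq X$ is a closed convex set such that $\alpha x\in K$ whenever $x\in K,\ \alpha\ge 0$, and such that $x\in K$, $-x\in K$ imply $x=0$. The dual cone is $K^*=\{f\in X^*: f(x)\ge 0\ \forall x\in K\}$. A bounded operator $B$ with $B(K)\subseteq K$ is semi-nonsupporting if for every pair $(x,f)$ with $x\in K\setminus\{0\}$ and $f\in K^*\setminus\{0\}$ there is $n=n(x,f)\in\mathbb N$ with $f(B^n x)>0$. *)

theory Defs
  imports "HOL-Analysis.Analysis"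
begin

definition ordering_cone :: "'a::real_normed_vector set \<Rightarrow> bool" where
  "ordering_cone K \<longleftrightarrow> closed K \<and> convex K \<and> (\<forall>x\<in>K. \<forall>\<alpha>::real. \<alpha> \<ge> 0 \<longrightarrow> \<alpha> *\<^sub>R x \<in> K)
     \<and> (\<forall>x. x \<in> K \<and> -x \<in> K \<longrightarrow> x = 0)"

definition dual_cone :: "'a::real_normed_vector set \<Rightarrow> ('a \<Rightarrow> real) set" where
  "dual_cone K = {f. bounded_linear f \<and> (\<forall>x\<in>K. f x \<ge> 0)}"

definition semi_nonsupporting :: "('a::real_normed_vector \<Rightarrow> 'a) \<Rightarrow> 'a set \<Rightarrow> bool" where
  "semi_nonsupporting B K \<longleftrightarrow>
     (\<forall>x \<in> K - {0}. \<forall>f \<in> dual_cone K - {(\<lambda>_. 0)}. \<exists>n::nat. n \<ge> 1 \<and> f ((B ^^ n) x) > 0)"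

end

theory Submission
  imports Defs
begin

text \<open>With \<open>c = min a b\<close>, the operator \<open>aT + bF - cA = (a - c)T + (b - c)F\<close> is
  positive, so \<open>aT + bF\<close> dominates \<open>cA\<close> in the cone order. Domination by a positive
  operator propagates to powers, \<open>(aT + bF)\<^sup>n \<ge> c\<^sup>n A\<^sup>n\<close>, and a positive functional
  that is positive on \<open>A\<^sup>n x\<close> is then positive on \<open>(aT + bF)\<^sup>n x\<close>.\<close>

lemma ordering_cone_scaleR:
  assumes "ordering_cone K" "x \<in> K" "r \<ge> 0"
  shows "r *\<^sub>R x \<in> K"
  using assms by (auto simp: ordering_cone_def)

lemma ordering_cone_add:
  assumes K: "ordering_cone K" and "x \<in> K" "y \<in> K"
  shows "x + y \<in> K"
proof -
  have "(1/2::real) *\<^sub>R x + (1/2::real) *\<^sub>R y \<in> K"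
    using K assms by (auto simp: ordering_cone_def convex_def)
  from ordering_cone_scaleR[OF K this, of 2] show ?thesis
    by (simp add: scaleR_add_right)
qed

lemma ordering_cone_dominates_funpow:
  assumes K: "ordering_cone K" and "linear B" and BK: "B ` K \<subseteq> K" and AK: "A ` K \<subseteq> K"
    and "c \<ge> 0" and dom: "\<And>y. y \<in> K \<Longrightarrow> B y - c *\<^sub>R A y \<in> K"
    and x: "x \<in> K"
  shows "(B ^^ n) x - c ^ n *\<^sub>R (A ^^ n) x \<in> K"
proof (induction n)
  case 0
  show ?case using ordering_cone_scaleR[OF K x, of 0] by simp
next
  case (Suc n)
  interpret B: linear B by fact
  let ?u = "(A ^^ n) x" and ?w = "(B ^^ n) x - c ^ n *\<^sub>R (A ^^ n) x"
  have u: "?u \<in> K"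
    using AK x by (induction n) auto
  have "(B ^^ Suc n) x - c ^ Suc n *\<^sub>R (A ^^ Suc n) x
      = B ?w + c ^ n *\<^sub>R (B ?u - c *\<^sub>R A ?u)"
    by (simp add: B.diff B.scale algebra_simps)
  moreover have "B ?w \<in> K"
    using BK Suc.IH by auto
  moreover have "c ^ n *\<^sub>R (B ?u - c *\<^sub>R A ?u) \<in> K"
    using ordering_cone_scaleR[OF K dom[OF u]] \<open>c \<ge> 0\<close> by simp
  ultimately show ?case
    using ordering_cone_add[OF K] by simp
qed

lemma semi_nonsupporting_if_dominates:
  assumes K: "ordering_cone K" and "linear B" and "B ` K \<subseteq> K" and "A ` K \<subseteq> K"
    and "c > 0" and "\<And>y. y \<in> K \<Longrightarrow> B y - c *\<^sub>R A y \<in> K"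
    and A: "semi_nonsupporting A K"
  shows "semi_nonsupporting B K"
  unfolding semi_nonsupporting_def
proof (intro ballI)
  fix x f assume x: "x \<in> K - {0}" and f: "f \<in> dual_cone K - {\<lambda>_. 0}"
  obtain n where n: "n \<ge> 1" "f ((A ^^ n) x) > 0"
    using A x f unfolding semi_nonsupporting_def by blast
  interpret f: bounded_linear f
    using f by (simp add: dual_cone_def)
  have "(B ^^ n) x - c ^ n *\<^sub>R (A ^^ n) x \<in> K"
    using ordering_cone_dominates_funpow[of K B A c x n] assms x by auto
  then have "f ((B ^^ n) x - c ^ n *\<^sub>R (A ^^ n) x) \<ge> 0"
    using f by (simp add: dual_cone_def)
  then have "f ((B ^^ n) x) - c ^ n * f ((A ^^ n) x) \<ge> 0"
    by (simp add: f.diff f.scaleR)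
  moreover have "c ^ n * f ((A ^^ n) x) > 0"
    using \<open>c > 0\<close> n by simp
  ultimately show "\<exists>n::nat. n \<ge> 1 \<and> f ((B ^^ n) x) > 0"
    using n(1) by force
qed

theorem corollary3p6:
  fixes K :: "'a::banach set" and A T F :: "'a \<Rightarrow> 'a" and a b :: real
  assumes "ordering_cone K"
    and "bounded_linear A" and "A ` K \<subseteq> K" and "semi_nonsupporting A K"
    and "A = (\<lambda>x. T x + F x)"
    and "bounded_linear T" and "bounded_linear F"
    and "T ` K \<subseteq> K" and "F ` K \<subseteq> K"
    and "a > 0" and "b > 0"
  shows "semi_nonsupporting (\<lambda>x. a *\<^sub>R T x + b *\<^sub>R F x) K"
proof (rule semi_nonsupporting_if_dominates)
  let ?c = "min a b"
  show "linear (\<lambda>x. a *\<^sub>R T x + b *\<^sub>R F x)"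
    using assms(6,7)
    by (intro bounded_linear.linear bounded_linear_add
        bounded_linear_compose[OF bounded_linear_scaleR_right])
  have TF: "a' *\<^sub>R T y + b' *\<^sub>R F y \<in> K" if "y \<in> K" "a' \<ge> 0" "b' \<ge> 0" for y a' b'
    using that assms(1,8,9) by (blast intro: ordering_cone_add ordering_cone_scaleR)
  show "(\<lambda>x. a *\<^sub>R T x + b *\<^sub>R F x) ` K \<subseteq> K"
    using TF assms(10,11) by auto
  show "a *\<^sub>R T y + b *\<^sub>R F y - ?c *\<^sub>R A y \<in> K" if "y \<in> K" for y
    using TF[OF that, of "a - ?c" "b - ?c"]
    by (simp add: assms(5) algebra_simps)
qed (use assms in auto)

end
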